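(* Consider the multi-product personalized pricing model described in the context, fix a vector $f\in\mathbb{R}^n$ with all components positive, and suppose that Assumptions A0 and A1 hold. Let $q_{\min}:=\min_{i\in N,j\in M}\bar p_{ij}/f_i$ and $q_{\max}:=\max_{i\in N,j\in M}\bar p_{ij}/f_i$. Then $$\bar{\mathcal{R}}\le \beta\,\mathcal{R}^f,\qquad \beta:=1+\ln(q_{\max}/q_{\min}).$$ Moreover, the bound is tight: for every $\rho>1$ there is an instance satisfying the hypotheses with $q_{\max}/q_{\min}=\rho$ and $\bar{\mathcal{R}}=(1+\ln\rho)\,\mathcal{R}^f$.
   Context: A firm sells products $N=\{1,\dots,n\}$ to customer types $M=\{1,\dots,m\}$. For each $i\in N$, $j\in M$, $d_{ij}:\mathbb{R}^n_{\ge 0}\to\mathbb{R}_{\ge 0}$ is the (non-negative) demand for product $i$ by type $j$ at price vector $p=(p_1,\dots,p_n)$. The profit from type $j$ is $R_j(p)=\sum_{i\in N}p_i d_{ij}(p)$ and $\mathcal{R}^*_j:=\max_{p\ge 0}R_j(p)$. Type weights $\theta_j>0$ satisfy $\sum_j\theta_j=1$. The optimal personalized profit is $\bar{\mathcal{R}}:=\sum_{j\in M}\theta_j\mathcal{R}^*_j$; the aggregate profit is $R(p):=\sum_{j}\theta_jR_j(p)$. For a positive vector $f$, $\mathcal{R}^f:=\max_{q>0}R(qf)$ (optimal profit when pricing along $f$). Assumption A0: for each $j\in M$, $R_j$ attains its maximum over $p\ge0$ at a price vector $\bar p^j=(\bar p_{1j},\dots,\bar p_{nj})$ with all components positive and finite;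 such maximizers are fixed. Define $\delta_{ij}(q):=1$ if $q\le \bar p_{ij}/f_i$ and $\delta_{ij}(q):=0$ otherwise, and for $q\ge0$ $$G(q):=\sum_{j\in M}\theta_j\sum_{i\in N}f_i d_{ij}(\bar p^j)\delta_{ij}(q),\qquad H(q):=\sum_{j\in M}\theta_j\sum_{i\in N}f_i d_{ij}(qf).$$ Assumption A1: $G(q)\le H(q)$ for all $q\ge 0$. (For the tightness claim, the paper's extremal instance has a single product, $f=e$, and a continuum of customer types with willingness to pay in $[1,\rho]$; the model is understood to allow such a continuum of types with sums over types replaced by integrals.) *)

theory Defs
  imports "HOL-Probability.Probability"
begin

definition nonneg_vec :: "('n \<Rightarrow> real) \<Rightarrow> bool" where
  "nonneg_vec p \<longleftrightarrow> (\<forall>i. 0 \<le> p i)"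

text \<open>d i j p : demand for product i by type j at price vector p.\<close>
definition profit :: "('n::finite \<Rightarrow> 'm \<Rightarrow> ('n \<Rightarrow> real) \<Rightarrow> real) \<Rightarrow> 'm \<Rightarrow> ('n \<Rightarrow> real) \<Rightarrow> real" where
  "profit d j p = (\<Sum>i\<in>UNIV. p i * d i j p)"

definition opt_profit :: "('n::finite \<Rightarrow> 'm \<Rightarrow> ('n \<Rightarrow> real) \<Rightarrow> real) \<Rightarrow> 'm \<Rightarrow> real" where
  "opt_profit d j = Sup (profit d j ` {p. nonneg_vec p})"

definition scal_vec :: "real \<Rightarrow> ('n \<Rightarrow> real) \<Rightarrow> ('n \<Rightarrow> real)" where
  "scal_vec q f = (\<lambda>i. q * f i)"

definition delta :: "('m \<Rightarrow> 'n \<Rightarrow> real) \<Rightarrow> ('n \<Rightarrow> real) \<Rightarrow> 'n \<Rightarrow> 'm \<Rightarrow> real \<Rightarrow> real" where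
  "delta pbar f i j q = (if q \<le> pbar j i / f i then 1 else 0)"

definition demand_nonneg :: "('n \<Rightarrow> 'm \<Rightarrow> ('n \<Rightarrow> real) \<Rightarrow> real) \<Rightarrow> bool" where
  "demand_nonneg d \<longleftrightarrow> (\<forall>i j p. nonneg_vec p \<longrightarrow> 0 \<le> d i j p)"

definition agg_profit :: "('m::finite \<Rightarrow> real) \<Rightarrow> ('n::finite \<Rightarrow> 'm \<Rightarrow> ('n \<Rightarrow> real) \<Rightarrow> real) \<Rightarrow> ('n \<Rightarrow> real) \<Rightarrow> real" where
  "agg_profit \<theta> d p = (\<Sum>j\<in>UNIV. \<theta> j * profit d j p)"

definition pers_profit :: "('m::finite \<Rightarrow> real) \<Rightarrow> ('n::finite \<Rightarrow> 'm \<Rightarrow> ('n \<Rightarrow> real) \<Rightarrow> real) \<Rightarrow> real" where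
  "pers_profit \<theta> d = (\<Sum>j\<in>UNIV. \<theta> j * opt_profit d j)"

definition f_profit :: "('m::finite \<Rightarrow> real) \<Rightarrow> ('n::finite \<Rightarrow> 'm \<Rightarrow> ('n \<Rightarrow> real) \<Rightarrow> real) \<Rightarrow> ('n \<Rightarrow> real) \<Rightarrow> real" where
  "f_profit \<theta> d f = Sup ((\<lambda>q. agg_profit \<theta> d (scal_vec q f)) ` {q. 0 < q})"

definition Gfun :: "('m::finite \<Rightarrow> real) \<Rightarrow> ('n::finite \<Rightarrow> 'm \<Rightarrow> ('n \<Rightarrow> real) \<Rightarrow> real) \<Rightarrow> ('m \<Rightarrow> 'n \<Rightarrow> real) \<Rightarrow> ('n \<Rightarrow> real) \<Rightarrow> real \<Rightarrow> real" where
  "Gfun \<theta> d pbar f q = (\<Sum>j\<in>UNIV. \<theta> j * (\<Sum>i\<in>UNIV. f i * d i j (pbar j) * delta pbar f i j q))"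

definition Hfun :: "('m::finite \<Rightarrow> real) \<Rightarrow> ('n::finite \<Rightarrow> 'm \<Rightarrow> ('n \<Rightarrow> real) \<Rightarrow> real) \<Rightarrow> ('n \<Rightarrow> real) \<Rightarrow> real \<Rightarrow> real" where
  "Hfun \<theta> d f q = (\<Sum>j\<in>UNIV. \<theta> j * (\<Sum>i\<in>UNIV. f i * d i j (scal_vec q f)))"

definition A0 :: "('n::finite \<Rightarrow> 'm \<Rightarrow> ('n \<Rightarrow> real) \<Rightarrow> real) \<Rightarrow> ('m \<Rightarrow> 'n \<Rightarrow> real) \<Rightarrow> bool" where
  "A0 d pbar \<longleftrightarrow> (\<forall>j. (\<forall>i. 0 < pbar j i) \<and> (\<forall>p. nonneg_vec p \<longrightarrow> profit d j p \<le> profit d j (pbar j)))"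

definition A1 :: "('m::finite \<Rightarrow> real) \<Rightarrow> ('n::finite \<Rightarrow> 'm \<Rightarrow> ('n \<Rightarrow> real) \<Rightarrow> real) \<Rightarrow> ('m \<Rightarrow> 'n \<Rightarrow> real) \<Rightarrow> ('n \<Rightarrow> real) \<Rightarrow> bool" where
  "A1 \<theta> d pbar f \<longleftrightarrow> (\<forall>q. 0 \<le> q \<longrightarrow> Gfun \<theta> d pbar f q \<le> Hfun \<theta> d f q)"

definition qmin :: "('m::finite \<Rightarrow> 'n::finite \<Rightarrow> real) \<Rightarrow> ('n \<Rightarrow> real) \<Rightarrow> real" where
  "qmin pbar f = Min ((\<lambda>(i, j). pbar j i / f i) ` UNIV)"

definition qmax :: "('m::finite \<Rightarrow> 'n::finite \<Rightarrow> real) \<Rightarrow> ('n \<Rightarrow> real) \<Rightarrow> real" where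
  "qmax pbar f = Max ((\<lambda>(i, j). pbar j i / f i) ` UNIV)"

section \<open>Continuum of customer types: type distribution is a probability measure Theta,
  sums over types replaced by (Bochner) integrals\<close>

definition c_demand_nonneg :: "'m measure \<Rightarrow> ('n \<Rightarrow> 'm \<Rightarrow> ('n \<Rightarrow> real) \<Rightarrow> real) \<Rightarrow> bool" where
  "c_demand_nonneg \<Theta> d \<longleftrightarrow> (\<forall>i. \<forall>j\<in>space \<Theta>. \<forall>p. nonneg_vec p \<longrightarrow> 0 \<le> d i j p)"

definition c_agg_profit :: "'m measure \<Rightarrow> ('n::finite \<Rightarrow> 'm \<Rightarrow> ('n \<Rightarrow> real) \<Rightarrow> real) \<Rightarrow> ('n \<Rightarrow> real) \<Rightarrow> real" where
  "c_agg_profit \<Theta> d p = (\<integral>j. profit d j p \<partial>\<Theta>)"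

definition c_pers_profit :: "'m measure \<Rightarrow> ('n::finite \<Rightarrow> 'm \<Rightarrow> ('n \<Rightarrow> real) \<Rightarrow> real) \<Rightarrow> real" where
  "c_pers_profit \<Theta> d = (\<integral>j. opt_profit d j \<partial>\<Theta>)"

definition c_f_profit :: "'m measure \<Rightarrow> ('n::finite \<Rightarrow> 'm \<Rightarrow> ('n \<Rightarrow> real) \<Rightarrow> real) \<Rightarrow> ('n \<Rightarrow> real) \<Rightarrow> real" where
  "c_f_profit \<Theta> d f = Sup ((\<lambda>q. c_agg_profit \<Theta> d (scal_vec q f)) ` {q. 0 < q})"

definition G_integrand :: "('n::finite \<Rightarrow> 'm \<Rightarrow> ('n \<Rightarrow> real) \<Rightarrow> real) \<Rightarrow> ('m \<Rightarrow> 'n \<Rightarrow> real) \<Rightarrow> ('n \<Rightarrow> real) \<Rightarrow> real \<Rightarrow> 'm \<Rightarrow> real" where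
  "G_integrand d pbar f q j = (\<Sum>i\<in>UNIV. f i * d i j (pbar j) * delta pbar f i j q)"

definition H_integrand :: "('n::finite \<Rightarrow> 'm \<Rightarrow> ('n \<Rightarrow> real) \<Rightarrow> real) \<Rightarrow> ('n \<Rightarrow> real) \<Rightarrow> real \<Rightarrow> 'm \<Rightarrow> real" where
  "H_integrand d f q j = (\<Sum>i\<in>UNIV. f i * d i j (scal_vec q f))"

definition c_Gfun :: "'m measure \<Rightarrow> ('n::finite \<Rightarrow> 'm \<Rightarrow> ('n \<Rightarrow> real) \<Rightarrow> real) \<Rightarrow> ('m \<Rightarrow> 'n \<Rightarrow> real) \<Rightarrow> ('n \<Rightarrow> real) \<Rightarrow> real \<Rightarrow> real" where
  "c_Gfun \<Theta> d pbar f q = (\<integral>j. G_integrand d pbar f q j \<partial>\<Theta>)"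

definition c_Hfun :: "'m measure \<Rightarrow> ('n::finite \<Rightarrow> 'm \<Rightarrow> ('n \<Rightarrow> real) \<Rightarrow> real) \<Rightarrow> ('n \<Rightarrow> real) \<Rightarrow> real \<Rightarrow> real" where
  "c_Hfun \<Theta> d f q = (\<integral>j. H_integrand d f q j \<partial>\<Theta>)"

definition c_integrable :: "'m measure \<Rightarrow> ('n::finite \<Rightarrow> 'm \<Rightarrow> ('n \<Rightarrow> real) \<Rightarrow> real) \<Rightarrow> ('m \<Rightarrow> 'n \<Rightarrow> real) \<Rightarrow> ('n \<Rightarrow> real) \<Rightarrow> bool" where
  "c_integrable \<Theta> d pbar f \<longleftrightarrow>
     (\<forall>p. nonneg_vec p \<longrightarrow> integrable \<Theta> (\<lambda>j. profit d j p)) \<and>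
     integrable \<Theta> (\<lambda>j. opt_profit d j) \<and>
     (\<forall>q. 0 \<le> q \<longrightarrow> integrable \<Theta> (G_integrand d pbar f q) \<and> integrable \<Theta> (H_integrand d f q))"

definition c_A0 :: "'m measure \<Rightarrow> ('n::finite \<Rightarrow> 'm \<Rightarrow> ('n \<Rightarrow> real) \<Rightarrow> real) \<Rightarrow> ('m \<Rightarrow> 'n \<Rightarrow> real) \<Rightarrow> bool" where
  "c_A0 \<Theta> d pbar \<longleftrightarrow> (\<forall>j\<in>space \<Theta>. (\<forall>i. 0 < pbar j i) \<and>
       (\<forall>p. nonneg_vec p \<longrightarrow> profit d j p \<le> profit d j (pbar j)))"

definition c_A1 :: "'m measure \<Rightarrow> ('n::finite \<Rightarrow> 'm \<Rightarrow> ('n \<Rightarrow> real) \<Rightarrow> real) \<Rightarrow> ('m \<Rightarrow> 'n \<Rightarrow> real) \<Rightarrow> ('n \<Rightarrow> real) \<Rightarrow> bool" where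
  "c_A1 \<Theta> d pbar f \<longleftrightarrow> (\<forall>q. 0 \<le> q \<longrightarrow> c_Gfun \<Theta> d pbar f q \<le> c_Hfun \<Theta> d f q)"

definition c_qmin :: "'m measure \<Rightarrow> ('m \<Rightarrow> 'n \<Rightarrow> real) \<Rightarrow> ('n \<Rightarrow> real) \<Rightarrow> real" where
  "c_qmin \<Theta> pbar f = (INF ij \<in> UNIV \<times> space \<Theta>. pbar (snd ij) (fst ij) / f (fst ij))"

definition c_qmax :: "'m measure \<Rightarrow> ('m \<Rightarrow> 'n \<Rightarrow> real) \<Rightarrow> ('n \<Rightarrow> real) \<Rightarrow> real" where
  "c_qmax \<Theta> pbar f = (SUP ij \<in> UNIV \<times> space \<Theta>. pbar (snd ij) (fst ij) / f (fst ij))"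

end

theory Submission
  imports Defs
begin

text \<open>
  Give each product-type pair s = (i, j) the weight c s = \<theta> j * f i * d i j (pbar j) and
  the level v s = pbar j i / f i, so that the personalised profit is the sum of c s * v s.
  If G q is the weight of the pairs of level at least q, then A1 gives
  q * G q \<le> q * H q = R (q f) \<le> R_f for every q > 0. Summing layer by layer over the
  distinct levels a_1 < ... < a_k, the lowest layer contributes a_1 * G a_1 \<le> R_f, and
  each further layer contributes
  (a_l - a_(l-1)) * G a_l \<le> (1 - a_(l-1) / a_l) * R_f \<le> ln (a_l / a_(l-1)) * R_f.
  The logarithms telescope to ln (q_max / q_min).

  For tightness, a single product is sold to a continuum of unit-demand types whose
  willingness to pay has the equal-revenue distribution on [1, \<rho>]: every price in [1, \<rho>]
  earns exactly 1, while the expected willingness to pay is 1 + ln \<rho>.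
\<close>

lemma one_minus_divide_le_ln_divide:
  fixes a m :: real
  assumes "0 < m" "m \<le> a"
  shows "1 - m / a \<le> ln (a / m)"
proof -
  have "ln (m / a) \<le> m / a - 1" using assms by (intro ln_le_minus_one) simp
  moreover have "ln (a / m) = - ln (m / a)" using assms by (simp add: ln_div)
  ultimately show ?thesis by linarith
qed

lemma sum_mult_diff_le_ln_ratio:
  fixes c v :: "'a \<Rightarrow> real"
  assumes "finite S" "\<And>s. s \<in> S \<Longrightarrow> 0 \<le> c s"
    and "\<And>s. s \<in> S \<Longrightarrow> m \<le> v s \<and> v s \<le> M" "0 < m" "m \<le> M"
    and "\<And>q. 0 < q \<Longrightarrow> q * sum c {s\<in>S. q \<le> v s} \<le> B"
  shows "(\<Sum>s\<in>S. c s * (v s - m)) \<le> B * ln (M / m)"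
  using assms
proof (induction S arbitrary: m rule: finite_psubset_induct)
  case (psubset S)
  note c_nonneg = psubset.prems(1) and bounds = psubset.prems(2) and m_pos = psubset.prems(3)
    and m_le_M = psubset.prems(4) and revenue_le = psubset.prems(5)
  have "0 \<le> sum c {s\<in>S. 1 \<le> v s}" using c_nonneg by (intro sum_nonneg) auto
  with revenue_le[of 1] have B_nonneg: "0 \<le> B" by simp
  show ?case
  proof (cases "S = {}")
    case True
    with m_pos m_le_M B_nonneg show ?thesis by simp
  next
    case False
    define a where "a = Min (v ` S)"
    have a_le: "a \<le> v s" if "s \<in> S" for s using psubset.hyps that by (simp add: a_def)
    have "a \<in> v ` S" using psubset.hyps False by (simp add: a_def)
    then obtain s\<^sub>0 where "s\<^sub>0 \<in> S" "v s\<^sub>0 = a" by blast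
    with bounds have "m \<le> a" "a \<le> M" by force+
    with m_pos have a_pos: "0 < a" by linarith
    define S' where "S' = {s\<in>S. a < v s}"
    have "S' \<subset> S" using \<open>s\<^sub>0 \<in> S\<close> \<open>v s\<^sub>0 = a\<close> by (auto simp: S'_def)
    have "q * sum c {s\<in>S'. q \<le> v s} \<le> B" if "0 < q" for q
    proof -
      have "sum c {s\<in>S'. q \<le> v s} \<le> sum c {s\<in>S. q \<le> v s}"
        using psubset.hyps c_nonneg by (intro sum_mono2) (auto simp: S'_def)
      with that revenue_le[OF that] show ?thesis
        by (meson mult_left_mono less_imp_le order_trans)
    qed
    with \<open>S' \<subset> S\<close> c_nonneg bounds a_pos \<open>a \<le> M\<close>
    have upper_levels: "(\<Sum>s\<in>S'. c s * (v s - a)) \<le> B * ln (M / a)"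
      by (intro psubset.IH) (auto simp: S'_def)
    have lowest_level: "(a - m) * sum c S \<le> B * ln (a / m)"
    proof -
      have "{s\<in>S. a \<le> v s} = S" using a_le by auto
      with revenue_le[OF a_pos] have "a * sum c S \<le> B" by simp
      have "(a - m) * sum c S = (1 - m / a) * (a * sum c S)" using a_pos by (simp add: field_simps)
      also have "\<dots> \<le> (1 - m / a) * B"
        using \<open>a * sum c S \<le> B\<close> \<open>m \<le> a\<close> a_pos by (intro mult_left_mono) auto
      also have "\<dots> \<le> ln (a / m) * B"
        using one_minus_divide_le_ln_divide[OF m_pos \<open>m \<le> a\<close>] B_nonneg
        by (rule mult_right_mono)
      finally show ?thesis by (simp add: mult.commute)
    qed
    have "(\<Sum>s\<in>S. c s * (v s - m)) = (a - m) * sum c S + (\<Sum>s\<in>S. c s * (v s - a))"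
      by (simp add: sum_distrib_left sum.distrib[symmetric] algebra_simps)
    also have "(\<Sum>s\<in>S. c s * (v s - a)) = (\<Sum>s\<in>S'. c s * (v s - a))"
      using psubset.hyps a_le by (intro sum.mono_neutral_right) (force simp: S'_def)+
    also have "(a - m) * sum c S + \<dots> \<le> B * ln (a / m) + B * ln (M / a)"
      using lowest_level upper_levels by (rule add_mono)
    also have "\<dots> = B * ln (M / m)"
      using a_pos m_pos \<open>a \<le> M\<close> by (simp add: ln_div algebra_simps)
    finally show ?thesis .
  qed
qed

lemma sum_mult_le_one_plus_ln_ratio:
  fixes c v :: "'a \<Rightarrow> real"
  assumes "finite S" "S \<noteq> {}" and c_nonneg: "\<And>s. s \<in> S \<Longrightarrow> 0 \<le> c s"
    and v_pos: "\<And>s. s \<in> S \<Longrightarrow> 0 < v s"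
    and revenue_le: "\<And>q. 0 < q \<Longrightarrow> q * sum c {s\<in>S. q \<le> v s} \<le> B"
  shows "(\<Sum>s\<in>S. c s * v s) \<le> (1 + ln (Max (v ` S) / Min (v ` S))) * B"
proof -
  define m where "m = Min (v ` S)"
  define M where "M = Max (v ` S)"
  have bounds: "m \<le> v s \<and> v s \<le> M" if "s \<in> S" for s
    using assms(1) that by (simp add: m_def M_def)
  have "m \<in> v ` S" using assms(1,2) by (simp add: m_def)
  then have "0 < m" "m \<le> M" using v_pos bounds by auto
  have "{s\<in>S. m \<le> v s} = S" using bounds by auto
  with revenue_le[OF \<open>0 < m\<close>] have "m * sum c S \<le> B" by simp
  have "(\<Sum>s\<in>S. c s * v s) = (\<Sum>s\<in>S. c s * (v s - m)) + m * sum c S"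
    by (simp add: sum_distrib_left sum.distrib[symmetric] algebra_simps)
  also have "\<dots> \<le> B * ln (M / m) + B"
    using sum_mult_diff_le_ln_ratio[OF assms(1) c_nonneg bounds \<open>0 < m\<close> \<open>m \<le> M\<close> revenue_le]
      \<open>m * sum c S \<le> B\<close> by (rule add_mono)
  finally show ?thesis by (simp add: m_def M_def algebra_simps)
qed

lemma opt_profit_eq_profit_maximizer:
  assumes "A0 d pbar"
  shows "opt_profit d j = profit d j (pbar j)"
  unfolding opt_profit_def
proof (rule cSup_eq_maximum)
  show "profit d j (pbar j) \<in> profit d j ` {p. nonneg_vec p}"
    using assms by (auto simp: A0_def nonneg_vec_def less_imp_le)
qed (use assms in \<open>auto simp: A0_def\<close>)

lemma agg_profit_scal_vec_eq_Hfun: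
  "agg_profit \<theta> d (scal_vec q f) = q * Hfun \<theta> d f q"
  by (simp add: agg_profit_def Hfun_def profit_def scal_vec_def sum_distrib_left algebra_simps)

lemma agg_profit_scal_vec_le_f_profit:
  assumes "A0 d pbar" "\<And>j. 0 \<le> \<theta> j" "\<And>i. 0 < f i" "0 < q"
  shows "agg_profit \<theta> d (scal_vec q f) \<le> f_profit \<theta> d f"
  unfolding f_profit_def
proof (rule cSup_upper)
  have "agg_profit \<theta> d (scal_vec r f) \<le> (\<Sum>j\<in>UNIV. \<theta> j * profit d j (pbar j))" if "0 < r" for r
  proof -
    have "nonneg_vec (scal_vec r f)"
      using that assms(3) by (auto simp: nonneg_vec_def scal_vec_def less_imp_le)
    with assms(1) show ?thesis
      unfolding agg_profit_def A0_def by (intro sum_mono mult_left_mono) (auto simp: assms(2))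
  qed
  then show "bdd_above ((\<lambda>r. agg_profit \<theta> d (scal_vec r f)) ` {r. 0 < r})"
    by (intro bdd_aboveI2) auto
qed (use assms(4) in simp)

lemma sum_sum_UNIV_eq_sum_pairs:
  fixes g :: "'n::finite \<Rightarrow> 'm::finite \<Rightarrow> 'a::comm_monoid_add"
  shows "(\<Sum>j\<in>UNIV. \<Sum>i\<in>UNIV. g i j) = (\<Sum>(i, j)\<in>UNIV. g i j)"
  by (subst sum.swap) (simp add: sum.cartesian_product)

lemma Gfun_eq_sum_pairs:
  "Gfun \<theta> d pbar f q =
     sum (\<lambda>(i, j). \<theta> j * f i * d i j (pbar j)) {(i, j). q \<le> pbar j i / f i}"
proof -
  have "Gfun \<theta> d pbar f q =
      (\<Sum>(i, j)\<in>UNIV. \<theta> j * f i * d i j (pbar j) * (if q \<le> pbar j i / f i then 1 else 0))"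
    unfolding Gfun_def delta_def sum_distrib_left sum_sum_UNIV_eq_sum_pairs[symmetric]
    by (simp add: algebra_simps)
  also have "\<dots> = sum (\<lambda>(i, j). \<theta> j * f i * d i j (pbar j)) {(i, j). q \<le> pbar j i / f i}"
    by (simp add: sum.If_cases case_prod_unfold if_distrib[of "(*) _"])
  finally show ?thesis .
qed

lemma pers_profit_eq_sum_pairs:
  assumes "A0 d pbar" "\<And>i. 0 < f i"
  shows "pers_profit \<theta> d = (\<Sum>(i, j)\<in>UNIV. \<theta> j * f i * d i j (pbar j) * (pbar j i / f i))"
  unfolding pers_profit_def opt_profit_eq_profit_maximizer[OF assms(1)] profit_def
    sum_distrib_left sum_sum_UNIV_eq_sum_pairs[symmetric]
  using assms(2) by (simp add: field_simps less_imp_neq[symmetric])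

theorem pers_profit_le_one_plus_ln_ratio_f_profit:
  assumes \<theta>_nonneg: "\<And>j. 0 \<le> \<theta> j" and f_pos: "\<And>i. 0 < f i"
    and "demand_nonneg d" "A0 d pbar" "A1 \<theta> d pbar f"
  shows "pers_profit \<theta> d \<le> (1 + ln (qmax pbar f / qmin pbar f)) * f_profit \<theta> d f"
proof -
  define c where "c = (\<lambda>(i, j). \<theta> j * f i * d i j (pbar j))"
  define v where "v = (\<lambda>(i, j). pbar j i / f i)"
  have "c s \<ge> 0" for s
    using \<open>demand_nonneg d\<close> \<open>A0 d pbar\<close> \<theta>_nonneg f_pos
    by (auto simp: c_def demand_nonneg_def A0_def nonneg_vec_def less_imp_le split: prod.split)
  moreover have "v s > 0" for s
    using \<open>A0 d pbar\<close> f_pos by (auto simp: v_def A0_def split: prod.split)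
  moreover have "q * sum c {s\<in>UNIV. q \<le> v s} \<le> f_profit \<theta> d f" if "0 < q" for q
  proof -
    have "q * sum c {s\<in>UNIV. q \<le> v s} = q * Gfun \<theta> d pbar f q"
      by (simp add: Gfun_eq_sum_pairs c_def v_def case_prod_unfold)
    also have "\<dots> \<le> q * Hfun \<theta> d f q"
      using \<open>A1 \<theta> d pbar f\<close> that by (simp add: A1_def)
    also have "\<dots> \<le> f_profit \<theta> d f"
      using agg_profit_scal_vec_le_f_profit[OF \<open>A0 d pbar\<close> \<theta>_nonneg f_pos that]
      by (simp add: agg_profit_scal_vec_eq_Hfun)
    finally show ?thesis .
  qed
  ultimately have "(\<Sum>s\<in>UNIV. c s * v s)
      \<le> (1 + ln (Max (v ` UNIV) / Min (v ` UNIV))) * f_profit \<theta> d f"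
    by (intro sum_mult_le_one_plus_ln_ratio) auto
  moreover have "pers_profit \<theta> d = (\<Sum>s\<in>UNIV. c s * v s)"
    using pers_profit_eq_sum_pairs[OF \<open>A0 d pbar\<close> f_pos]
    by (simp add: c_def v_def case_prod_unfold)
  moreover have "qmax pbar f = Max (v ` UNIV)" "qmin pbar f = Min (v ` UNIV)"
    by (simp_all add: qmax_def qmin_def v_def)
  ultimately show ?thesis by simp
qed

definition unit_demand :: "('m \<Rightarrow> real) \<Rightarrow> unit \<Rightarrow> 'm \<Rightarrow> (unit \<Rightarrow> real) \<Rightarrow> real" where
  "unit_demand w i j p = (if p i \<le> w j then 1 else 0)"

lemma profit_unit_demand: "profit (unit_demand w) j p = p () * (if p () \<le> w j then 1 else 0)"
  by (simp add: profit_def unit_demand_def UNIV_unit)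

lemma opt_profit_unit_demand:
  assumes "0 < w j"
  shows "opt_profit (unit_demand w) j = w j"
  unfolding opt_profit_def
proof (rule cSup_eq_maximum)
  show "w j \<in> profit (unit_demand w) j ` {p. nonneg_vec p}"
    using assms by (intro image_eqI[of _ _ "\<lambda>_. w j"]) (auto simp: profit_unit_demand nonneg_vec_def)
qed (use assms in \<open>auto simp: profit_unit_demand\<close>)

lemma G_integrand_unit_demand:
  "G_integrand (unit_demand w) (\<lambda>j _. w j) (\<lambda>_. 1) q = (\<lambda>j. if q \<le> w j then 1 else 0)"
  by (simp add: fun_eq_iff G_integrand_def unit_demand_def delta_def)

lemma H_integrand_unit_demand:
  "H_integrand (unit_demand w) (\<lambda>_. 1) q = (\<lambda>j. if q \<le> w j then 1 else 0)"
  by (simp add: fun_eq_iff H_integrand_def unit_demand_def scal_vec_def)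

lemma c_demand_nonneg_unit_demand: "c_demand_nonneg \<Theta> (unit_demand w)"
  by (simp add: c_demand_nonneg_def unit_demand_def)

lemma c_A0_unit_demand:
  assumes "\<And>j. j \<in> space \<Theta> \<Longrightarrow> 0 < w j"
  shows "c_A0 \<Theta> (unit_demand w) (\<lambda>j _. w j)"
  using assms by (auto simp: c_A0_def profit_unit_demand less_imp_le)

lemma c_A1_unit_demand: "c_A1 \<Theta> (unit_demand w) (\<lambda>j _. w j) (\<lambda>_. 1)"
  by (simp add: c_A1_def c_Gfun_def c_Hfun_def G_integrand_unit_demand H_integrand_unit_demand)

lemma c_qmax_unit_demand: "c_qmax \<Theta> (\<lambda>j _. w j) (\<lambda>_. 1) = (SUP j\<in>space \<Theta>. w j)"
  by (simp add: c_qmax_def image_comp[of w snd, symmetric, unfolded comp_def])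

lemma c_qmin_unit_demand: "c_qmin \<Theta> (\<lambda>j _. w j) (\<lambda>_. 1) = (INF j\<in>space \<Theta>. w j)"
  by (simp add: c_qmin_def image_comp[of w snd, symmetric, unfolded comp_def])

lemma c_agg_profit_unit_demand:
  "c_agg_profit \<Theta> (unit_demand w) (scal_vec q (\<lambda>_. 1)) = (\<integral>j. q * (if q \<le> w j then 1 else 0) \<partial>\<Theta>)"
  by (simp add: c_agg_profit_def profit_unit_demand scal_vec_def)

lemma c_pers_profit_unit_demand:
  assumes "\<And>j. j \<in> space \<Theta> \<Longrightarrow> 0 < w j"
  shows "c_pers_profit \<Theta> (unit_demand w) = (\<integral>j. w j \<partial>\<Theta>)"
  unfolding c_pers_profit_def using assms
  by (intro Bochner_Integration.integral_cong) (auto simp: opt_profit_unit_demand)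

text \<open>
  A type t uniform on [0, 1] values the product at min \<rho> (1 / t) (written with max to
  avoid 1 / 0), so a price q \<in> [1, \<rho>] is accepted by the types t \<le> 1 / q, a set of
  measure 1 / q.
\<close>
definition equal_revenue_wtp :: "real \<Rightarrow> real \<Rightarrow> real" where
  "equal_revenue_wtp \<rho> t = 1 / max (1 / \<rho>) t"

interpretation unit_interval: prob_space "lebesgue_on {0..1::real}"
  by (rule prob_space_restrict_space) auto

context
  fixes \<rho> :: real
  assumes one_le_\<rho>: "1 \<le> \<rho>"
begin

lemma max_inverse_pos: "0 < max (1 / \<rho>) t"
  using one_le_\<rho> by (simp add: less_max_iff_disj)

lemma equal_revenue_wtp_pos: "0 < equal_revenue_wtp \<rho> t"
  using max_inverse_pos by (simp add: equal_revenue_wtp_def)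

lemma equal_revenue_wtp_le: "equal_revenue_wtp \<rho> t \<le> \<rho>"
proof -
  have "1 / max (1 / \<rho>) t \<le> 1 / (1 / \<rho>)"
    using one_le_\<rho> max_inverse_pos[of t] by (intro divide_left_mono) auto
  then show ?thesis by (simp add: equal_revenue_wtp_def)
qed

lemma one_le_equal_revenue_wtp: "t \<le> 1 \<Longrightarrow> 1 \<le> equal_revenue_wtp \<rho> t"
  using one_le_\<rho> max_inverse_pos[of t] by (simp add: equal_revenue_wtp_def)

lemma equal_revenue_wtp_0: "equal_revenue_wtp \<rho> 0 = \<rho>"
  using one_le_\<rho> by (simp add: equal_revenue_wtp_def max_def)

lemma equal_revenue_wtp_1: "equal_revenue_wtp \<rho> 1 = 1"
  using one_le_\<rho> by (simp add: equal_revenue_wtp_def max_def)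

lemma le_equal_revenue_wtp_imp_le_divide:
  assumes "0 < q" "q \<le> equal_revenue_wtp \<rho> t"
  shows "t \<le> 1 / q"
proof -
  have "q * t \<le> q * max (1 / \<rho>) t" using \<open>0 < q\<close> by (intro mult_left_mono) auto
  also have "\<dots> \<le> 1"
    using assms(2) max_inverse_pos[of t] by (simp add: equal_revenue_wtp_def field_simps)
  finally show ?thesis using \<open>0 < q\<close> by (simp add: field_simps)
qed

lemma SUP_equal_revenue_wtp: "(SUP t\<in>{0..1}. equal_revenue_wtp \<rho> t) = \<rho>"
  by (rule cSup_eq_maximum)
    (auto simp: equal_revenue_wtp_le intro: image_eqI[of _ _ 0] equal_revenue_wtp_0[symmetric])

lemma INF_equal_revenue_wtp: "(INF t\<in>{0..1}. equal_revenue_wtp \<rho> t) = 1"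
  by (rule cInf_eq_minimum)
    (auto simp: one_le_equal_revenue_wtp intro: image_eqI[of _ _ 1] equal_revenue_wtp_1[symmetric])

lemma equal_revenue_wtp_measurable: "equal_revenue_wtp \<rho> \<in> borel_measurable (lebesgue_on {0..1})"
  using max_inverse_pos unfolding equal_revenue_wtp_def
  by (intro continuous_imp_measurable_on_sets_lebesgue continuous_intros)
    (auto simp: less_imp_neq[symmetric])

lemma has_integral_equal_revenue_wtp: "(equal_revenue_wtp \<rho> has_integral 1 + ln \<rho>) {0..1}"
proof -
  have "(equal_revenue_wtp \<rho> has_integral \<rho> * (1 / \<rho>) - \<rho> * 0) {0..1 / \<rho>}"
  proof (rule fundamental_theorem_of_calculus)
    fix t assume "t \<in> {0..1 / \<rho>}"
    then have "max (1 / \<rho>) t = 1 / \<rho>" by simp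
    then have "equal_revenue_wtp \<rho> t = \<rho>" by (simp add: equal_revenue_wtp_def)
    then show "((\<lambda>t. \<rho> * t) has_vector_derivative equal_revenue_wtp \<rho> t) (at t within {0..1 / \<rho>})"
      by (auto intro!: derivative_eq_intros)
  qed (use one_le_\<rho> in simp)
  moreover have "(equal_revenue_wtp \<rho> has_integral ln 1 - ln (1 / \<rho>)) {1 / \<rho>..1}"
  proof (rule fundamental_theorem_of_calculus)
    fix t assume t: "t \<in> {1 / \<rho>..1}"
    then have "0 < t" using one_le_\<rho> by (auto intro: less_le_trans[of 0 "1 / \<rho>"])
    moreover from t have "equal_revenue_wtp \<rho> t = 1 / t" by (simp add: equal_revenue_wtp_def)
    ultimately show "(ln has_vector_derivative equal_revenue_wtp \<rho> t) (at t within {1 / \<rho>..1})"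
      by (auto intro!: derivative_eq_intros simp: has_real_derivative_iff_has_vector_derivative[symmetric])
  qed (use one_le_\<rho> in simp)
  ultimately have "(equal_revenue_wtp \<rho> has_integral \<rho> * (1 / \<rho>) - \<rho> * 0 + (ln 1 - ln (1 / \<rho>))) {0..1}"
    by (rule has_integral_combine[rotated 2]) (use one_le_\<rho> in auto)
  then show ?thesis using one_le_\<rho> by (simp add: ln_div)
qed

lemma integrable_purchase_indicator:
  "integrable (lebesgue_on {0..1}) (\<lambda>t. if q \<le> equal_revenue_wtp \<rho> t then 1 else 0 :: real)"
  using equal_revenue_wtp_measurable
  by (intro unit_interval.integrable_const_bound[where B=1]) (auto intro: measurable_If)

lemma integrable_equal_revenue_wtp: "integrable (lebesgue_on {0..1}) (equal_revenue_wtp \<rho>)"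
  using equal_revenue_wtp_measurable equal_revenue_wtp_pos equal_revenue_wtp_le
  by (intro unit_interval.integrable_const_bound[where B=\<rho>]) (auto simp: less_imp_le)

lemma integral_equal_revenue_wtp: "(\<integral>t. equal_revenue_wtp \<rho> t \<partial>lebesgue_on {0..1}) = 1 + ln \<rho>"
  using integrable_equal_revenue_wtp has_integral_equal_revenue_wtp
  by (simp add: lebesgue_integral_eq_integral integral_unique)

lemma revenue_equal_revenue_wtp_le_one:
  assumes "0 < q"
  shows "(\<integral>t. q * (if q \<le> equal_revenue_wtp \<rho> t then 1 else 0) \<partial>lebesgue_on {0..1}) \<le> 1"
proof (cases "q \<le> 1")
  case True
  have "(\<integral>t. q * (if q \<le> equal_revenue_wtp \<rho> t then 1 else 0) \<partial>lebesgue_on {0..1})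
      \<le> (\<integral>t. 1 \<partial>lebesgue_on {0..1::real})"
    using integrable_purchase_indicator True assms by (intro integral_mono) auto
  then show ?thesis using unit_interval.prob_space by simp
next
  case False
  have "{0..1 / q} \<in> sets (lebesgue_on {0..1})"
    using False by (subst sets_restrict_space_iff) auto
  then have integrable_bound: "integrable (lebesgue_on {0..1}) (\<lambda>t. q * indicator {0..1 / q} t)"
    by (intro integrable_mult_right integrable_indicator)
      (simp_all add: unit_interval.emeasure_finite less_top[symmetric])
  have "(\<integral>t. q * (if q \<le> equal_revenue_wtp \<rho> t then 1 else 0) \<partial>lebesgue_on {0..1})
      \<le> (\<integral>t. q * indicator {0..1 / q} t \<partial>lebesgue_on {0..1})"
    using integrable_purchase_indicator integrable_bound
      le_equal_revenue_wtp_imp_le_divide[OF assms] assms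
    by (intro integral_mono) (auto simp: indicator_def)
  also have "\<dots> = q * measure lebesgue {0..1 / q}"
    using False by (simp add: measure_restrict_space)
  also have "\<dots> = 1" using assms by simp
  finally show ?thesis .
qed

lemma c_integrable_equal_revenue:
  "c_integrable (lebesgue_on {0..1}) (unit_demand (equal_revenue_wtp \<rho>))
     (\<lambda>j _. equal_revenue_wtp \<rho> j) (\<lambda>_. 1)"
proof -
  have "opt_profit (unit_demand (equal_revenue_wtp \<rho>)) = equal_revenue_wtp \<rho>"
    using equal_revenue_wtp_pos by (simp add: fun_eq_iff opt_profit_unit_demand)
  then show ?thesis
    using integrable_purchase_indicator integrable_equal_revenue_wtp
    by (simp add: c_integrable_def profit_unit_demand G_integrand_unit_demand
        H_integrand_unit_demand)
qed

lemma c_f_profit_equal_revenue: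
  "c_f_profit (lebesgue_on {0..1}) (unit_demand (equal_revenue_wtp \<rho>)) (\<lambda>_. 1) = 1"
  unfolding c_f_profit_def c_agg_profit_unit_demand
proof (rule cSup_eq_maximum)
  have "(\<integral>t. (1::real) * (if 1 \<le> equal_revenue_wtp \<rho> t then 1 else 0) \<partial>lebesgue_on {0..1}) =
      (\<integral>t. 1 \<partial>lebesgue_on {0..1::real})"
    by (intro Bochner_Integration.integral_cong) (auto simp: one_le_equal_revenue_wtp)
  also have "\<dots> = 1" using unit_interval.prob_space by simp
  finally show "1 \<in> (\<lambda>q. \<integral>t. q * (if q \<le> equal_revenue_wtp \<rho> t then 1 else 0)
      \<partial>lebesgue_on {0..1}) ` {q. 0 < q}"
    by (intro image_eqI[of _ _ 1]) auto
qed (blast intro: revenue_equal_revenue_wtp_le_one)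

end

theorem equal_revenue_instance_tight:
  assumes "1 < \<rho>"
  shows "\<exists>(\<Theta> :: real measure) (d :: unit \<Rightarrow> real \<Rightarrow> (unit \<Rightarrow> real) \<Rightarrow> real)
               (pbar :: real \<Rightarrow> unit \<Rightarrow> real) (f :: unit \<Rightarrow> real).
               prob_space \<Theta> \<and> (\<forall>i. 0 < f i) \<and> c_demand_nonneg \<Theta> d \<and>
               c_integrable \<Theta> d pbar f \<and> c_A0 \<Theta> d pbar \<and> c_A1 \<Theta> d pbar f \<and>
               c_qmax \<Theta> pbar f / c_qmin \<Theta> pbar f = \<rho> \<and>
               0 < c_f_profit \<Theta> d f \<and>
               c_pers_profit \<Theta> d = (1 + ln \<rho>) * c_f_profit \<Theta> d f"
proof (intro exI conjI)
  have "1 \<le> \<rho>" using assms by simp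
  note wtp_pos = equal_revenue_wtp_pos[OF \<open>1 \<le> \<rho>\<close>]
  show "prob_space (lebesgue_on {0..1::real})" by (rule unit_interval.prob_space_axioms)
  show "c_demand_nonneg (lebesgue_on {0..1}) (unit_demand (equal_revenue_wtp \<rho>))"
    by (rule c_demand_nonneg_unit_demand)
  show "c_integrable (lebesgue_on {0..1}) (unit_demand (equal_revenue_wtp \<rho>))
      (\<lambda>j _. equal_revenue_wtp \<rho> j) (\<lambda>_. 1)"
    using \<open>1 \<le> \<rho>\<close> by (rule c_integrable_equal_revenue)
  show "c_A0 (lebesgue_on {0..1}) (unit_demand (equal_revenue_wtp \<rho>))
      (\<lambda>j _. equal_revenue_wtp \<rho> j)"
    using wtp_pos by (rule c_A0_unit_demand)
  show "c_A1 (lebesgue_on {0..1}) (unit_demand (equal_revenue_wtp \<rho>))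
      (\<lambda>j _. equal_revenue_wtp \<rho> j) (\<lambda>_. 1)"
    by (rule c_A1_unit_demand)
  show "c_qmax (lebesgue_on {0..1}) (\<lambda>j _. equal_revenue_wtp \<rho> j) (\<lambda>_. 1) /
        c_qmin (lebesgue_on {0..1}) (\<lambda>j _. equal_revenue_wtp \<rho> j) (\<lambda>_. 1) = \<rho>"
    using \<open>1 \<le> \<rho>\<close>
    by (simp add: c_qmax_unit_demand c_qmin_unit_demand SUP_equal_revenue_wtp INF_equal_revenue_wtp)
  show "0 < c_f_profit (lebesgue_on {0..1}) (unit_demand (equal_revenue_wtp \<rho>)) (\<lambda>_. 1)"
    using \<open>1 \<le> \<rho>\<close> by (simp add: c_f_profit_equal_revenue)
  show "c_pers_profit (lebesgue_on {0..1}) (unit_demand (equal_revenue_wtp \<rho>)) =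
        (1 + ln \<rho>) * c_f_profit (lebesgue_on {0..1}) (unit_demand (equal_revenue_wtp \<rho>)) (\<lambda>_. 1)"
    using \<open>1 \<le> \<rho>\<close> wtp_pos
    by (simp add: c_pers_profit_unit_demand c_f_profit_equal_revenue integral_equal_revenue_wtp)
qed simp

theorem theorem1:
  shows "(\<forall>(\<theta> :: 'm::finite \<Rightarrow> real) (d :: 'n::finite \<Rightarrow> 'm \<Rightarrow> ('n \<Rightarrow> real) \<Rightarrow> real)
            (pbar :: 'm \<Rightarrow> 'n \<Rightarrow> real) (f :: 'n \<Rightarrow> real).
            (\<forall>j. 0 < \<theta> j) \<and> (\<Sum>j\<in>UNIV. \<theta> j) = 1 \<and> (\<forall>i. 0 < f i) \<and>
            demand_nonneg d \<and> A0 d pbar \<and> A1 \<theta> d pbar f \<longrightarrow>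
            pers_profit \<theta> d \<le> (1 + ln (qmax pbar f / qmin pbar f)) * f_profit \<theta> d f)
       \<and>
         (\<forall>\<rho>::real. 1 < \<rho> \<longrightarrow>
            (\<exists>(\<Theta> :: real measure) (d :: unit \<Rightarrow> real \<Rightarrow> (unit \<Rightarrow> real) \<Rightarrow> real)
               (pbar :: real \<Rightarrow> unit \<Rightarrow> real) (f :: unit \<Rightarrow> real).
               prob_space \<Theta> \<and> (\<forall>i. 0 < f i) \<and> c_demand_nonneg \<Theta> d \<and>
               c_integrable \<Theta> d pbar f \<and> c_A0 \<Theta> d pbar \<and> c_A1 \<Theta> d pbar f \<and>
               c_qmax \<Theta> pbar f / c_qmin \<Theta> pbar f = \<rho> \<and>
               0 < c_f_profit \<Theta> d f \<and>
               c_pers_profit \<Theta> d = (1 + ln \<rho>) * c_f_profit \<Theta> d f))"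
  by (intro conjI allI impI pers_profit_le_one_plus_ln_ratio_f_profit equal_revenue_instance_tight)
    (auto intro: less_imp_le)

end
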